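(* The intruder model $(\Sigma_{\mathrm{enc}},\vdash)$ is absorbing: for all lists $\vec x=x_1,\dots,x_n$ and $\vec y=y_1,\dots,y_n$ of pairwise distinct names, every finite set of messages $\Gamma$ with $\mathrm{names}(\Gamma)\cap\{y_1,\dots,y_n\}=\emptyset$, and $\Gamma'=\Gamma\{x_1\mapsto y_1,\dots,x_n\mapsto y_n\}$, and every message $M$ with $\mathrm{names}(M)\subseteq\mathrm{names}(\Gamma)$, we have $\Gamma\cup\Gamma'\vdash M$ if and only if $\Gamma\vdash M$.
   Context: Fix a countably infinite set of names. $\Sigma_{\mathrm{enc}}$ consists of the binary constructors $(\cdot,\cdot)$ (pairing), $\{\cdot\}_{\cdot}$ (symmetric encryption), $\mathrm{aenc}(\cdot,\cdot)$ and the unary constructor $\mathrm{pub}(\cdot)$; messages are terms over names and these constructors; $\mathrm{names}(M)$ is the set of names in $M$; substitutions are applied homomorphically. $\Gamma,M$ denotes $\Gamma\cup\{M\}$. The relation $\vdash$ is the least relation between finite sets of messages and messages closed under: (Id) if $M\in\Gamma$ then $\Gamma\vdash M$; (Pub) $\Gamma\vdash K$ implies $\Gamma\vdash\mathrm{pub}(K)$; (P$_L$) $\Gamma,(M,N),M,N\vdash M'$ implies $\Gamma,(M,N)\vdash M'$; (P$_R$) $\Gamma\vdash M$ and $\Gamma\vdash N$ imply $\Gamma\vdash(M,N)$; (S$_L$) $\Gamma,\{M\}_K\vdash K$ and $\Gamma,\{M\}_K,M,K\vdash N$ imply $\Gamma,\{M\}_K\vdash N$; (S$_R$) $\Gamma\vdash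 M$ and $\Gamma\vdash K$ imply $\Gamma\vdash\{M\}_K$; (A$_L$) $\Gamma,\mathrm{aenc}(M,\mathrm{pub}(K))\vdash K$ and $\Gamma,\mathrm{aenc}(M,\mathrm{pub}(K)),M,K\vdash N$ imply $\Gamma,\mathrm{aenc}(M,\mathrm{pub}(K))\vdash N$; (A$_R$) $\Gamma\vdash M$ and $\Gamma\vdash N$ imply $\Gamma\vdash\mathrm{aenc}(M,N)$. *)

theory Defs
  imports Main
begin

datatype (msg_names: 'n) msg =
    Name 'n
  | MPair "'n msg" "'n msg"
  | SEnc "'n msg" "'n msg"
  | AEnc "'n msg" "'n msg"
  | Pub "'n msg"
  for map: map_msg

definition names_set :: "'n msg set \<Rightarrow> 'n set" where
  "names_set \<Gamma> = (\<Union>M\<in>\<Gamma>. msg_names M)"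

definition ren :: "'n list \<Rightarrow> 'n list \<Rightarrow> 'n \<Rightarrow> 'n" where
  "ren xs ys a = (case map_of (zip xs ys) a of Some b \<Rightarrow> b | None \<Rightarrow> a)"

definition subst_set :: "'n list \<Rightarrow> 'n list \<Rightarrow> 'n msg set \<Rightarrow> 'n msg set" where
  "subst_set xs ys \<Gamma> = map_msg (ren xs ys) ` \<Gamma>"

inductive deduce :: "'n msg set \<Rightarrow> 'n msg \<Rightarrow> bool" (infix "\<turnstile>" 50) where
  Id: "finite \<Gamma> \<Longrightarrow> M \<in> \<Gamma> \<Longrightarrow> \<Gamma> \<turnstile> M"
| PubR: "\<Gamma> \<turnstile> K \<Longrightarrow> \<Gamma> \<turnstile> Pub K"
| PL: "insert M (insert N (insert (MPair M N) \<Gamma>)) \<turnstile> M' \<Longrightarrow> insert (MPair M N) \<Gamma> \<turnstile> M'"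
| PR: "\<Gamma> \<turnstile> M \<Longrightarrow> \<Gamma> \<turnstile> N \<Longrightarrow> \<Gamma> \<turnstile> MPair M N"
| SL: "insert (SEnc M K) \<Gamma> \<turnstile> K \<Longrightarrow> insert M (insert K (insert (SEnc M K) \<Gamma>)) \<turnstile> N
       \<Longrightarrow> insert (SEnc M K) \<Gamma> \<turnstile> N"
| SR: "\<Gamma> \<turnstile> M \<Longrightarrow> \<Gamma> \<turnstile> K \<Longrightarrow> \<Gamma> \<turnstile> SEnc M K"
| AL: "insert (AEnc M (Pub K)) \<Gamma> \<turnstile> K \<Longrightarrow> insert M (insert K (insert (AEnc M (Pub K)) \<Gamma>)) \<turnstile> N
       \<Longrightarrow> insert (AEnc M (Pub K)) \<Gamma> \<turnstile> N"
| AR: "\<Gamma> \<turnstile> M \<Longrightarrow> \<Gamma> \<turnstile> N \<Longrightarrow> \<Gamma> \<turnstile> AEnc M N"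

end

theory Submission
  imports Defs
begin

text \<open>As \<open>ys\<close> is duplicate-free, the renaming back \<open>ys \<mapsto> xs\<close> undoes \<open>xs \<mapsto> ys\<close> on every name not in \<open>ys\<close> and fixes
  all such names; since \<open>\<Gamma>\<close> and \<open>M\<close> avoid \<open>ys\<close>, it maps \<open>\<Gamma> \<union> \<Gamma>'\<close> onto \<open>\<Gamma>\<close> and \<open>M\<close> to
  itself, turning a derivation of \<open>M\<close> from \<open>\<Gamma> \<union> \<Gamma>'\<close> into one from \<open>\<Gamma>\<close>.\<close>

lemma deduce_mono: "\<Gamma> \<turnstile> M \<Longrightarrow> \<Gamma> \<subseteq> \<Delta> \<Longrightarrow> finite \<Delta> \<Longrightarrow> \<Delta> \<turnstile> M"
proof (induction arbitrary: \<Delta> rule: deduce.induct)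
  case (PL M N \<Gamma> M')
  have "insert M (insert N (insert (MPair M N) \<Delta>)) \<turnstile> M'"
    using PL by (intro PL.IH) auto
  then have "insert (MPair M N) \<Delta> \<turnstile> M'" by (rule deduce.PL)
  then show ?case using PL.prems by (simp add: insert_absorb)
next
  case (SL M K \<Gamma> N)
  have "insert (SEnc M K) \<Delta> \<turnstile> K" "insert M (insert K (insert (SEnc M K) \<Delta>)) \<turnstile> N"
    using SL by (intro SL.IH; auto)+
  then have "insert (SEnc M K) \<Delta> \<turnstile> N" by (rule deduce.SL)
  then show ?case using SL.prems by (simp add: insert_absorb)
next
  case (AL M K \<Gamma> N)
  have "insert (AEnc M (Pub K)) \<Delta> \<turnstile> K"
    "insert M (insert K (insert (AEnc M (Pub K)) \<Delta>)) \<turnstile> N"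
    using AL by (intro AL.IH; auto)+
  then have "insert (AEnc M (Pub K)) \<Delta> \<turnstile> N" by (rule deduce.AL)
  then show ?case using AL.prems by (simp add: insert_absorb)
qed (auto intro: deduce.intros)

lemma deduce_map_msg: "\<Gamma> \<turnstile> M \<Longrightarrow> map_msg f ` \<Gamma> \<turnstile> map_msg f M"
  by (induction rule: deduce.induct) (auto intro: deduce.intros)

lemma ren_fixes:
  assumes "a \<notin> set xs"
  shows "ren xs ys a = a"
proof -
  have "a \<notin> fst ` set (zip xs ys)"
    using assms by (auto dest: set_zip_leftD)
  then have "map_of (zip xs ys) a = None"
    by (simp add: map_of_eq_None_iff)
  then show ?thesis by (simp add: ren_def)
qed

lemma map_msg_ren_fixes: "msg_names N \<inter> set xs = {} \<Longrightarrow> map_msg (ren xs ys) N = N"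
  by (rule msg.map_ident_strong) (blast intro: ren_fixes)

lemma ren_inverse:
  assumes "distinct ys" and "a \<notin> set ys"
  shows "ren ys xs (ren xs ys a) = a"
proof (cases "map_of (zip xs ys) a")
  case None
  then have "ren xs ys a = a" by (simp add: ren_def)
  then show ?thesis using assms(2) by (simp add: ren_fixes)
next
  case (Some b)
  then have "(b, a) \<in> set (zip ys xs)"
    by (subst zip_commute) (auto dest: map_of_SomeD)
  moreover have "distinct (map fst (zip ys xs))"
    using assms(1) by (simp add: map_fst_zip_take)
  ultimately show ?thesis using Some by (simp add: ren_def)
qed

lemma map_msg_ren_inverse:
  assumes "distinct ys" and "msg_names N \<inter> set ys = {}"
  shows "map_msg (ren ys xs) (map_msg (ren xs ys) N) = N"
proof -
  have "ren ys xs (ren xs ys a) = a" if "a \<in> msg_names N" for a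
    using that assms(2) by (auto intro: ren_inverse[OF assms(1)])
  then show ?thesis by (simp add: msg.map_comp msg.map_ident_strong)
qed

lemma image_ren_Un_subst_set:
  assumes "distinct ys" and "names_set \<Gamma> \<inter> set ys = {}"
  shows "map_msg (ren ys xs) ` (\<Gamma> \<union> subst_set xs ys \<Gamma>) = \<Gamma>"
proof -
  have disjoint: "msg_names N \<inter> set ys = {}" if "N \<in> \<Gamma>" for N
    using that assms(2) by (auto simp: names_set_def)
  have "map_msg (ren ys xs) ` \<Gamma> = \<Gamma>"
    using disjoint map_msg_ren_fixes by force
  moreover have "map_msg (ren ys xs) ` subst_set xs ys \<Gamma> = \<Gamma>"
    unfolding subst_set_def image_image
    using disjoint map_msg_ren_inverse[OF assms(1)] by force
  ultimately show ?thesis by (simp add: image_Un)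
qed

theorem lemma3p6:
  fixes xs ys :: "nat list" and \<Gamma> :: "nat msg set" and M :: "nat msg"
  assumes "length xs = length ys"
    and "distinct xs" and "distinct ys"
    and "finite \<Gamma>"
    and "names_set \<Gamma> \<inter> set ys = {}"
    and "msg_names M \<subseteq> names_set \<Gamma>"
  shows "(\<Gamma> \<union> subst_set xs ys \<Gamma>) \<turnstile> M \<longleftrightarrow> \<Gamma> \<turnstile> M"
proof
  assume "\<Gamma> \<union> subst_set xs ys \<Gamma> \<turnstile> M"
  then have "map_msg (ren ys xs) ` (\<Gamma> \<union> subst_set xs ys \<Gamma>) \<turnstile> map_msg (ren ys xs) M"
    by (rule deduce_map_msg)
  moreover have "map_msg (ren ys xs) M = M"
    using assms(5,6) by (intro map_msg_ren_fixes) blast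
  ultimately show "\<Gamma> \<turnstile> M"
    using assms(3,5) by (simp add: image_ren_Un_subst_set)
next
  assume "\<Gamma> \<turnstile> M"
  moreover have "finite (\<Gamma> \<union> subst_set xs ys \<Gamma>)"
    using assms(4) by (simp add: subst_set_def)
  ultimately show "\<Gamma> \<union> subst_set xs ys \<Gamma> \<turnstile> M"
    by (blast intro: deduce_mono)
qed

end
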